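(* Let $X$ be compact and $a\in\mathrm{H}^1(X;A)$, and assume $S_a$ is non-empty. Then for any $\alpha_1,\alpha_2\in S_a$, any $\widehat g\in\widehat G_a$, any $x\in X$ and any $p(\widehat g)$-invariant Borel probability measure $\mu$ on $X$, one has $\widehat{\mathrm{rot}}_{x,\alpha_1}(\widehat g)=\widehat{\mathrm{rot}}_{x,\alpha_2}(\widehat g)$ (whenever these are defined) and $\widehat{\mathrm{rot}}_{\mu,\alpha_1}(\widehat g)=\widehat{\mathrm{rot}}_{\mu,\alpha_2}(\widehat g)$; that is, the local and mean translation numbers do not depend on the choice of $\alpha\in S_a$.
   Context: $A$ is $\mathbb{Z}$ or the discrete group $\mathbb{R}$. $X$ is a path-connected space, $a\in\mathrm{H}^1(X;A)$, $\pi\colon\widehat X_a\to X$ a principal $A$-bundle with holonomy $a$, $T_r$ the action of $r\in A$. $\widehat G_a$ is the group of homeomorphisms $\widehat g$ of $\widehat X_a$ with $\pi\circ\widehat g=g\circ\pi$ for a homeomorphism $g=p(\widehat g)$ of $X$. A real singular $1$-cocycle $\alpha$ representing $a$ is standard if there is a continuous $\theta\colon\widehat X_a\to\mathbb{R}$ with $d\theta=\pi^*\alpha$ and $\theta(T_r\widehat y)=\theta(\widehat y)+r$ for all $\widehat y, r$; $S_a$ is the set of standard cocycles representing $a$. For such $\alpha$ and $x\in X$, $\rho_{x,\alpha}(\widehat g)=\theta(\widehat g(\widehat x))-\theta(\widehat x)$ with $\widehat x\in\pi^{-1}(x)$ (this does not depend on the choice of $\widehat x$ nor of any $0$-cochain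 $\theta$ with $d\theta=\pi^*\alpha$ and $\theta(T_r\widehat y)=\theta(\widehat y)+r$); $\widehat{\mathrm{rot}}_{x,\alpha}(\widehat g)=\lim_{n\to\infty}\rho_{x,\alpha}(\widehat g^n)/n$ when it exists; for a $p(\widehat g)$-invariant Borel probability measure $\mu$, $\widehat{\mathrm{rot}}_{\mu,\alpha}(\widehat g)=\int_X\rho_{x,\alpha}(\widehat g)\,d\mu(x)$. *)

theory Defs
  imports "HOL-Probability.Probability" "HOL-Homology.Homology"
begin

definition vtx0 :: "nat \<Rightarrow> real" where "vtx0 = (\<lambda>i. if i = 0 then 1 else 0)"
definition vtx1 :: "nat \<Rightarrow> real" where "vtx1 = (\<lambda>i. if i = 1 then 1 else 0)"

text \<open>The coefficient group A is a subgroup of the reals: either the integers or all of R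
  (with the discrete topology).\<close>
definition principal_bundle ::
  "real set \<Rightarrow> 'a topology \<Rightarrow> 'b topology \<Rightarrow> ('b \<Rightarrow> 'a) \<Rightarrow> (real \<Rightarrow> 'b \<Rightarrow> 'b) \<Rightarrow> bool" where
  "principal_bundle A X Xh \<pi> T \<longleftrightarrow>
     continuous_map Xh X \<pi> \<and>
     (\<forall>r\<in>A. homeomorphic_map Xh Xh (T r)) \<and>
     (\<forall>y\<in>topspace Xh. T 0 y = y) \<and>
     (\<forall>r\<in>A. \<forall>s\<in>A. \<forall>y\<in>topspace Xh. T (r + s) y = T r (T s y)) \<and>
     (\<forall>r\<in>A. \<forall>y\<in>topspace Xh. \<pi> (T r y) = \<pi> y) \<and>
     (\<forall>x\<in>topspace X. \<exists>U. openin X U \<and> x \<in> U \<and>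
        (\<exists>\<phi>. homeomorphic_map (subtopology Xh {y\<in>topspace Xh. \<pi> y \<in> U})
                 (prod_topology (subtopology X U) (discrete_topology A)) \<phi> \<and>
             (\<forall>y\<in>topspace Xh. \<pi> y \<in> U \<longrightarrow> fst (\<phi> y) = \<pi> y \<and>
                 (\<forall>r\<in>A. \<phi> (T r y) = (fst (\<phi> y), snd (\<phi> y) + r)))))"

definition singular_1cocycle :: "'a topology \<Rightarrow> (((nat \<Rightarrow> real) \<Rightarrow> 'a) \<Rightarrow> real) \<Rightarrow> bool" where
  "singular_1cocycle X \<alpha> \<longleftrightarrow>
     (\<forall>\<tau>. singular_simplex 2 X \<tau> \<longrightarrow>
        \<alpha> (singular_face 2 0 \<tau>) - \<alpha> (singular_face 2 1 \<tau>) + \<alpha> (singular_face 2 2 \<tau>) = 0)"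

text \<open>The class a in H^1(X;A) is the holonomy of the bundle; a real cocycle represents a
  iff its value on every loop (closed singular 1-simplex) is the holonomy along it, i.e.
  the r such that a lift of the loop ends at T r of its starting point.\<close>
definition represents_holonomy ::
  "real set \<Rightarrow> 'a topology \<Rightarrow> 'b topology \<Rightarrow> ('b \<Rightarrow> 'a) \<Rightarrow> (real \<Rightarrow> 'b \<Rightarrow> 'b)
   \<Rightarrow> (((nat \<Rightarrow> real) \<Rightarrow> 'a) \<Rightarrow> real) \<Rightarrow> bool" where
  "represents_holonomy A X Xh \<pi> T \<alpha> \<longleftrightarrow>
     singular_1cocycle X \<alpha> \<and>
     (\<forall>\<gamma> \<gamma>h r. singular_simplex 1 X \<gamma> \<and> \<gamma> vtx0 = \<gamma> vtx1 \<and>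
        singular_simplex 1 Xh \<gamma>h \<and> (\<forall>t\<in>standard_simplex 1. \<pi> (\<gamma>h t) = \<gamma> t) \<and>
        r \<in> A \<and> \<gamma>h vtx1 = T r (\<gamma>h vtx0) \<longrightarrow> \<alpha> \<gamma> = r)"

definition standard_potential ::
  "real set \<Rightarrow> 'a topology \<Rightarrow> 'b topology \<Rightarrow> ('b \<Rightarrow> 'a) \<Rightarrow> (real \<Rightarrow> 'b \<Rightarrow> 'b)
   \<Rightarrow> (((nat \<Rightarrow> real) \<Rightarrow> 'a) \<Rightarrow> real) \<Rightarrow> ('b \<Rightarrow> real) \<Rightarrow> bool" where
  "standard_potential A X Xh \<pi> T \<alpha> \<theta> \<longleftrightarrow>
     continuous_map Xh euclideanreal \<theta> \<and>
     (\<forall>\<sigma>. singular_simplex 1 Xh \<sigma> \<longrightarrow>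
        \<theta> (\<sigma> vtx1) - \<theta> (\<sigma> vtx0) = \<alpha> (restrict (\<pi> \<circ> \<sigma>) (standard_simplex 1))) \<and>
     (\<forall>r\<in>A. \<forall>y\<in>topspace Xh. \<theta> (T r y) = \<theta> y + r)"

definition standard_cocycles ::
  "real set \<Rightarrow> 'a topology \<Rightarrow> 'b topology \<Rightarrow> ('b \<Rightarrow> 'a) \<Rightarrow> (real \<Rightarrow> 'b \<Rightarrow> 'b)
   \<Rightarrow> (((nat \<Rightarrow> real) \<Rightarrow> 'a) \<Rightarrow> real) set" where
  "standard_cocycles A X Xh \<pi> T =
     {\<alpha>. represents_holonomy A X Xh \<pi> T \<alpha> \<and> (\<exists>\<theta>. standard_potential A X Xh \<pi> T \<alpha> \<theta>)}"

definition rho ::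
  "real set \<Rightarrow> 'a topology \<Rightarrow> 'b topology \<Rightarrow> ('b \<Rightarrow> 'a) \<Rightarrow> (real \<Rightarrow> 'b \<Rightarrow> 'b)
   \<Rightarrow> (((nat \<Rightarrow> real) \<Rightarrow> 'a) \<Rightarrow> real) \<Rightarrow> ('b \<Rightarrow> 'b) \<Rightarrow> 'a \<Rightarrow> real" where
  "rho A X Xh \<pi> T \<alpha> gh x =
     (let \<theta> = (SOME \<theta>. standard_potential A X Xh \<pi> T \<alpha> \<theta>);
          xh = (SOME y. y \<in> topspace Xh \<and> \<pi> y = x)
      in \<theta> (gh xh) - \<theta> xh)"

text \<open>Local translation number: limit of rho(gh^n)/n (exists iff the sequence converges).\<close>
definition rot_seq ::
  "real set \<Rightarrow> 'a topology \<Rightarrow> 'b topology \<Rightarrow> ('b \<Rightarrow> 'a) \<Rightarrow> (real \<Rightarrow> 'b \<Rightarrow> 'b)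
   \<Rightarrow> (((nat \<Rightarrow> real) \<Rightarrow> 'a) \<Rightarrow> real) \<Rightarrow> ('b \<Rightarrow> 'b) \<Rightarrow> 'a \<Rightarrow> nat \<Rightarrow> real" where
  "rot_seq A X Xh \<pi> T \<alpha> gh x n = rho A X Xh \<pi> T \<alpha> (gh ^^ n) x / real n"

definition mean_rot ::
  "real set \<Rightarrow> 'a topology \<Rightarrow> 'b topology \<Rightarrow> ('b \<Rightarrow> 'a) \<Rightarrow> (real \<Rightarrow> 'b \<Rightarrow> 'b)
   \<Rightarrow> (((nat \<Rightarrow> real) \<Rightarrow> 'a) \<Rightarrow> real) \<Rightarrow> ('b \<Rightarrow> 'b) \<Rightarrow> 'a measure \<Rightarrow> real" where
  "mean_rot A X Xh \<pi> T \<alpha> gh \<mu> = (\<integral>x. rho A X Xh \<pi> T \<alpha> gh x \<partial>\<mu>)"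

definition lifts_homeo :: "'a topology \<Rightarrow> 'b topology \<Rightarrow> ('b \<Rightarrow> 'a) \<Rightarrow> ('b \<Rightarrow> 'b) \<Rightarrow> ('a \<Rightarrow> 'a) \<Rightarrow> bool" where
  "lifts_homeo X Xh \<pi> gh g \<longleftrightarrow> homeomorphic_map Xh Xh gh \<and> homeomorphic_map X X g \<and>
     (\<forall>y\<in>topspace Xh. \<pi> (gh y) = g (\<pi> y))"

definition borel_of :: "'a topology \<Rightarrow> 'a measure" where
  "borel_of X = sigma (topspace X) {U. openin X U}"

definition invariant_borel_prob :: "'a topology \<Rightarrow> ('a \<Rightarrow> 'a) \<Rightarrow> 'a measure \<Rightarrow> bool" where
  "invariant_borel_prob X g \<mu> \<longleftrightarrow> prob_space \<mu> \<and> sets \<mu> = sets (borel_of X) \<and>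
     g \<in> measurable \<mu> \<mu> \<and> distr \<mu> \<mu> g = \<mu>"

end

theory Submission
  imports Defs
begin

text \<open>If \<open>\<theta>\<^sub>1, \<theta>\<^sub>2\<close> are potentials of \<open>\<alpha>\<^sub>1, \<alpha>\<^sub>2 \<in> S\<^sub>a\<close>, then \<open>\<theta>\<^sub>1 - \<theta>\<^sub>2\<close> is invariant
  under the action of \<open>A\<close>, so it descends (via local sections) to a continuous function \<open>F\<close>
  on \<open>X\<close>, which is bounded because \<open>X\<close> is compact. Hence
  \<open>\<rho>\<^sub>1(k) - \<rho>\<^sub>2(k) = F(\<pi>(k x')) - F(x)\<close> for a point \<open>x'\<close> over \<open>x\<close>. For \<open>k = gh\<^sup>n\<close>
  this difference is bounded, so it disappears after division by \<open>n\<close>; for \<open>k = gh\<close> it is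
  the coboundary \<open>F \<circ> g - F\<close>, whose integral vanishes for every \<open>g\<close>-invariant measure.\<close>

lemma principal_bundle_trivialisation:
  assumes "principal_bundle A X Xh \<pi> T" and "x \<in> topspace X"
  obtains U \<phi> where "openin X U" and "x \<in> U"
    and "homeomorphic_map (subtopology Xh {y \<in> topspace Xh. \<pi> y \<in> U})
           (prod_topology (subtopology X U) (discrete_topology A)) \<phi>"
    and "\<And>y. y \<in> topspace Xh \<Longrightarrow> \<pi> y \<in> U \<Longrightarrow> fst (\<phi> y) = \<pi> y"
    and "\<And>y r. y \<in> topspace Xh \<Longrightarrow> \<pi> y \<in> U \<Longrightarrow> r \<in> A \<Longrightarrow> \<phi> (T r y) = (\<pi> y, snd (\<phi> y) + r)"
proof -
  have "\<forall>x\<in>topspace X. \<exists>U. openin X U \<and> x \<in> U \<and>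
        (\<exists>\<phi>. homeomorphic_map (subtopology Xh {y\<in>topspace Xh. \<pi> y \<in> U})
                 (prod_topology (subtopology X U) (discrete_topology A)) \<phi> \<and>
             (\<forall>y\<in>topspace Xh. \<pi> y \<in> U \<longrightarrow> fst (\<phi> y) = \<pi> y \<and>
                 (\<forall>r\<in>A. \<phi> (T r y) = (fst (\<phi> y), snd (\<phi> y) + r))))"
    using assms(1) unfolding principal_bundle_def by (elim conjE)
  with assms(2) obtain U \<phi> where "openin X U" "x \<in> U"
    "homeomorphic_map (subtopology Xh {y\<in>topspace Xh. \<pi> y \<in> U})
       (prod_topology (subtopology X U) (discrete_topology A)) \<phi>"
    "\<forall>y\<in>topspace Xh. \<pi> y \<in> U \<longrightarrow> fst (\<phi> y) = \<pi> y \<and>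
       (\<forall>r\<in>A. \<phi> (T r y) = (fst (\<phi> y), snd (\<phi> y) + r))"
    by blast
  then show ?thesis
    using that[of U \<phi>] by auto
qed

lemma principal_bundle_same_fibre_orbit:
  assumes A_diff: "\<And>r s. r \<in> A \<Longrightarrow> s \<in> A \<Longrightarrow> r - s \<in> A"
    and pb: "principal_bundle A X Xh \<pi> T"
    and y: "y \<in> topspace Xh" and y': "y' \<in> topspace Xh" and fibre: "\<pi> y' = \<pi> y"
  obtains r where "r \<in> A" and "y' = T r y"
proof -
  have "\<pi> y \<in> topspace X"
    using pb y by (auto simp: principal_bundle_def continuous_map_def)
  then obtain U \<phi> where "openin X U" and U: "\<pi> y \<in> U"
    and hm: "homeomorphic_map (subtopology Xh {z \<in> topspace Xh. \<pi> z \<in> U})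
               (prod_topology (subtopology X U) (discrete_topology A)) \<phi>"
    and fst_\<phi>: "\<And>z. z \<in> topspace Xh \<Longrightarrow> \<pi> z \<in> U \<Longrightarrow> fst (\<phi> z) = \<pi> z"
    and \<phi>_T: "\<And>z r. z \<in> topspace Xh \<Longrightarrow> \<pi> z \<in> U \<Longrightarrow> r \<in> A \<Longrightarrow> \<phi> (T r z) = (\<pi> z, snd (\<phi> z) + r)"
    using principal_bundle_trivialisation[OF pb] by blast
  let ?V = "subtopology Xh {z \<in> topspace Xh. \<pi> z \<in> U}"
  have V: "y \<in> topspace ?V" "y' \<in> topspace ?V"
    using y y' U fibre by auto
  have "snd (\<phi> z) \<in> A" if "z \<in> topspace ?V" for z
  proof -
    have "\<phi> z \<in> topspace (prod_topology (subtopology X U) (discrete_topology A))"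
      using homeomorphic_imp_surjective_map[OF hm] that by blast
    then show ?thesis
      by (simp add: topspace_prod_topology mem_Times_iff)
  qed
  with V have r: "snd (\<phi> y') - snd (\<phi> y) \<in> A" (is "?r \<in> A")
    by (intro A_diff)
  have "homeomorphic_map Xh Xh (T ?r)" and "\<pi> (T ?r y) = \<pi> y"
    using pb r y unfolding principal_bundle_def by blast+
  then have "T ?r y \<in> topspace ?V"
    using y U homeomorphic_imp_surjective_map by fastforce
  moreover have "\<phi> (T ?r y) = \<phi> y'"
    using \<phi>_T[OF y U r] fst_\<phi>[OF y'] fibre U by (simp add: prod_eq_iff)
  ultimately have "y' = T ?r y"
    using homeomorphic_imp_injective_map[OF hm] V by (auto dest: inj_onD)
  with r show ?thesis by (rule that)
qed

lemma principal_bundle_local_section: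
  assumes A0: "0 \<in> A" and pb: "principal_bundle A X Xh \<pi> T" and x: "x \<in> topspace X"
  obtains U s where "openin X U" and "x \<in> U" and "continuous_map (subtopology X U) Xh s"
    and "\<And>u. u \<in> U \<Longrightarrow> s u \<in> topspace Xh \<and> \<pi> (s u) = u"
proof -
  obtain U \<phi> where U: "openin X U" "x \<in> U"
    and hm: "homeomorphic_map (subtopology Xh {y \<in> topspace Xh. \<pi> y \<in> U})
               (prod_topology (subtopology X U) (discrete_topology A)) \<phi>"
    and fst_\<phi>: "\<And>y. y \<in> topspace Xh \<Longrightarrow> \<pi> y \<in> U \<Longrightarrow> fst (\<phi> y) = \<pi> y"
    by (rule principal_bundle_trivialisation[OF pb x]) blast
  let ?V = "subtopology Xh {y \<in> topspace Xh. \<pi> y \<in> U}"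
  obtain \<psi> where \<psi>: "homeomorphic_maps ?V (prod_topology (subtopology X U) (discrete_topology A)) \<phi> \<psi>"
    using hm homeomorphic_map_maps by blast
  define s where "s u = \<psi> (u, 0)" for u
  have "continuous_map (subtopology X U) (prod_topology (subtopology X U) (discrete_topology A)) (\<lambda>u. (u, 0))"
    using A0 by (intro continuous_map_pairedI) auto
  moreover have "continuous_map (prod_topology (subtopology X U) (discrete_topology A)) ?V \<psi>"
    using \<psi> homeomorphic_maps_def by blast
  ultimately have s_cont: "continuous_map (subtopology X U) ?V s"
    unfolding s_def using continuous_map_compose by (simp add: o_def)
  have "s u \<in> topspace Xh \<and> \<pi> (s u) = u" if u: "u \<in> U" for u
  proof -
    have uX: "u \<in> topspace (subtopology X U)"
      using U(1) u openin_subset by auto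
    then have "s u \<in> topspace ?V"
      using continuous_map_image_subset_topspace[OF s_cont] by blast
    moreover have "\<phi> (s u) = (u, 0)"
      using \<psi> uX A0 unfolding homeomorphic_maps_def s_def by (simp add: topspace_prod_topology)
    ultimately show ?thesis
      using fst_\<phi> by fastforce
  qed
  with U s_cont show ?thesis
    using continuous_map_into_fulltopology that by blast
qed

lemma principal_bundle_invariant_map_descends:
  assumes A0: "0 \<in> A" and A_diff: "\<And>r s. r \<in> A \<Longrightarrow> s \<in> A \<Longrightarrow> r - s \<in> A"
    and pb: "principal_bundle A X Xh \<pi> T"
    and f_cont: "continuous_map Xh Y f"
    and f_inv: "\<And>r y. r \<in> A \<Longrightarrow> y \<in> topspace Xh \<Longrightarrow> f (T r y) = f y"
  obtains F where "continuous_map X Y F" and "\<And>y. y \<in> topspace Xh \<Longrightarrow> f y = F (\<pi> y)"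
proof
  define F where "F u = f (SOME y. y \<in> topspace Xh \<and> \<pi> y = u)" for u
  show fibre: "f y = F (\<pi> y)" if y: "y \<in> topspace Xh" for y
  proof -
    define y' where "y' = (SOME y'. y' \<in> topspace Xh \<and> \<pi> y' = \<pi> y)"
    have "y' \<in> topspace Xh" "\<pi> y' = \<pi> y"
      unfolding y'_def by (rule someI2[of _ y], use y in auto)+
    then obtain r where "r \<in> A" "y' = T r y"
      using principal_bundle_same_fibre_orbit[OF A_diff pb y] by blast
    then show ?thesis
      using f_inv y unfolding F_def y'_def[symmetric] by simp
  qed
  have "\<exists>U s. openin X U \<and> x \<in> U \<and> continuous_map (subtopology X U) Xh s \<and>
      (\<forall>u\<in>U. s u \<in> topspace Xh \<and> \<pi> (s u) = u)" if "x \<in> topspace X" for x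
    by (rule principal_bundle_local_section[OF A0 pb that]) blast
  then obtain U s where U: "\<And>x. x \<in> topspace X \<Longrightarrow> openin X (U x) \<and> x \<in> U x"
    and s_cont: "\<And>x. x \<in> topspace X \<Longrightarrow> continuous_map (subtopology X (U x)) Xh (s x)"
    and s_section: "\<And>x u. x \<in> topspace X \<Longrightarrow> u \<in> U x \<Longrightarrow> s x u \<in> topspace Xh \<and> \<pi> (s x u) = u"
    by metis
  have F_local: "f (s x u) = F u" if "x \<in> topspace X" "u \<in> U x" for x u
    using fibre s_section[OF that] by metis
  show "continuous_map X Y F"
  proof (rule pasting_lemma[where I = "topspace X" and T = U and f = "\<lambda>x. f \<circ> s x"])
    show "continuous_map (subtopology X (U x)) Y (f \<circ> s x)" if "x \<in> topspace X" for x
      using continuous_map_compose[OF s_cont[OF that] f_cont] .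
  qed (use U F_local in auto)
qed

lemma standard_cocycles_SOME_potential:
  "\<alpha> \<in> standard_cocycles A X Xh \<pi> T \<Longrightarrow>
    standard_potential A X Xh \<pi> T \<alpha> (SOME \<theta>. standard_potential A X Xh \<pi> T \<alpha> \<theta>)"
  unfolding standard_cocycles_def by (simp add: someI_ex)

lemma standard_cocycles_rho_diff:
  assumes A0: "0 \<in> A" and A_diff: "\<And>r s. r \<in> A \<Longrightarrow> s \<in> A \<Longrightarrow> r - s \<in> A"
    and pb: "principal_bundle A X Xh \<pi> T"
    and \<alpha>1: "\<alpha>1 \<in> standard_cocycles A X Xh \<pi> T" and \<alpha>2: "\<alpha>2 \<in> standard_cocycles A X Xh \<pi> T"
  \<comment> \<open>\<open>y\<close> is the point of the fibre over \<open>u\<close> that \<open>rho\<close> picks by choice\<close>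
  shows "\<exists>F. continuous_map X euclideanreal F \<and>
    (\<forall>k u. k ` topspace Xh \<subseteq> topspace Xh \<longrightarrow> u \<in> topspace X \<longrightarrow>
       (\<exists>y\<in>topspace Xh. \<pi> y = u \<and>
          rho A X Xh \<pi> T \<alpha>1 k u - rho A X Xh \<pi> T \<alpha>2 k u = F (\<pi> (k y)) - F u))"
proof -
  define \<theta>1 where "\<theta>1 = (SOME \<theta>. standard_potential A X Xh \<pi> T \<alpha>1 \<theta>)"
  define \<theta>2 where "\<theta>2 = (SOME \<theta>. standard_potential A X Xh \<pi> T \<alpha>2 \<theta>)"
  have "standard_potential A X Xh \<pi> T \<alpha>1 \<theta>1" "standard_potential A X Xh \<pi> T \<alpha>2 \<theta>2"
    using \<alpha>1 \<alpha>2 unfolding \<theta>1_def \<theta>2_def by (auto intro: standard_cocycles_SOME_potential)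
  then have "continuous_map Xh euclideanreal (\<lambda>y. \<theta>1 y - \<theta>2 y)"
    and "\<And>r y. r \<in> A \<Longrightarrow> y \<in> topspace Xh \<Longrightarrow> \<theta>1 (T r y) - \<theta>2 (T r y) = \<theta>1 y - \<theta>2 y"
    unfolding standard_potential_def by (auto intro: continuous_map_diff)
  then obtain F where F_cont: "continuous_map X euclideanreal F"
    and F: "\<And>y. y \<in> topspace Xh \<Longrightarrow> \<theta>1 y - \<theta>2 y = F (\<pi> y)"
    using principal_bundle_invariant_map_descends[OF A0 A_diff pb, where f = "\<lambda>y. \<theta>1 y - \<theta>2 y"]
    by blast
  show ?thesis
  proof (intro exI conjI allI impI, fact F_cont)
    fix k u
    assume k: "k ` topspace Xh \<subseteq> topspace Xh" and u: "u \<in> topspace X"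
    define y where "y = (SOME y. y \<in> topspace Xh \<and> \<pi> y = u)"
    obtain U s where "u \<in> U" "\<And>v. v \<in> U \<Longrightarrow> s v \<in> topspace Xh \<and> \<pi> (s v) = v"
      by (rule principal_bundle_local_section[OF A0 pb u]) blast
    then have y: "y \<in> topspace Xh" "\<pi> y = u"
      unfolding y_def by (metis (mono_tags, lifting) someI)+
    have "rho A X Xh \<pi> T \<alpha>1 k u - rho A X Xh \<pi> T \<alpha>2 k u = (\<theta>1 (k y) - \<theta>2 (k y)) - (\<theta>1 y - \<theta>2 y)"
      unfolding rho_def Let_def \<theta>1_def[symmetric] \<theta>2_def[symmetric] y_def[symmetric] by simp
    also have "\<dots> = F (\<pi> (k y)) - F u"
      using F k y by auto
    finally show "\<exists>y\<in>topspace Xh. \<pi> y = u \<and>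
        rho A X Xh \<pi> T \<alpha>1 k u - rho A X Xh \<pi> T \<alpha>2 k u = F (\<pi> (k y)) - F u"
      using y by blast
  qed
qed

lemma compact_space_continuous_map_bounded:
  fixes F :: "'a \<Rightarrow> 'b::real_normed_vector"
  assumes "compact_space X" and "continuous_map X euclidean F"
  obtains B where "\<And>u. u \<in> topspace X \<Longrightarrow> norm (F u) \<le> B"
proof -
  have "compact (F ` topspace X)"
    using image_compactin[OF _ assms(2)] assms(1) compact_space_def by auto
  then obtain B where "\<forall>v \<in> F ` topspace X. norm v \<le> B"
    using compact_imp_bounded bounded_iff by blast
  then show ?thesis
    using that by blast
qed

lemma LIMSEQ_divide_real_iff_bounded_diff:
  fixes a b :: "nat \<Rightarrow> real"
  assumes "\<And>n. \<bar>a n - b n\<bar> \<le> B"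
  shows "(\<lambda>n. a n / real n) \<longlonglongrightarrow> L \<longleftrightarrow> (\<lambda>n. b n / real n) \<longlonglongrightarrow> L"
proof -
  have diff: "(\<lambda>n. (a n - b n) / real n) \<longlonglongrightarrow> 0"
  proof (rule Lim_null_comparison[OF _ lim_const_over_n[of B]])
    show "\<forall>\<^sub>F n in sequentially. norm ((a n - b n) / real n) \<le> B / real n"
      using assms by (intro always_eventually allI) (simp add: abs_divide divide_right_mono)
  qed
  then show ?thesis
  proof (intro iffI)
    assume "(\<lambda>n. a n / real n) \<longlonglongrightarrow> L"
    from tendsto_diff[OF this diff] show "(\<lambda>n. b n / real n) \<longlonglongrightarrow> L"
      by (simp add: diff_divide_distrib)
  next
    assume "(\<lambda>n. b n / real n) \<longlonglongrightarrow> L"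
    from tendsto_add[OF this diff] show "(\<lambda>n. a n / real n) \<longlonglongrightarrow> L"
      by (simp add: diff_divide_distrib)
  qed
qed

lemma space_borel_of: "space (borel_of X) = topspace X"
  unfolding borel_of_def by (rule space_measure_of) (auto dest: openin_subset)

lemma continuous_map_borel_measurable:
  fixes F :: "'a \<Rightarrow> 'b::topological_space"
  assumes F: "continuous_map X euclidean F" and M: "sets M = sets (borel_of X)"
  shows "F \<in> borel_measurable M"
proof (rule borel_measurableI)
  fix S :: "'b set"
  assume "open S"
  then have "openin X {u \<in> topspace X. F u \<in> S}"
    using F by (simp add: continuous_map)
  moreover have "F -` S \<inter> space M = {u \<in> topspace X. F u \<in> S}"
    using sets_eq_imp_space_eq[OF M] by (auto simp: space_borel_of)
  ultimately show "F -` S \<inter> space M \<in> sets M"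
    unfolding M borel_of_def by (subst sets_measure_of) (auto dest: openin_subset)
qed

lemma integral_invariant_coboundary:
  fixes F :: "'a \<Rightarrow> 'b::{banach, second_countable_topology}"
  assumes g: "g \<in> measurable M M" and inv: "distr M M g = M" and F: "integrable M F"
  shows "integrable M (\<lambda>x. F (g x) - F x)" and "integral\<^sup>L M (\<lambda>x. F (g x) - F x) = 0"
proof -
  have Fg: "integrable M (\<lambda>x. F (g x))"
    using integrable_distr[OF g] F inv by simp
  then show "integrable M (\<lambda>x. F (g x) - F x)"
    using F by simp
  have "integral\<^sup>L M (\<lambda>x. F (g x)) = integral\<^sup>L M F"
    using integral_distr[OF g borel_measurable_integrable[OF F]] inv by simp
  then show "integral\<^sup>L M (\<lambda>x. F (g x) - F x) = 0"
    using Fg F by simp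
qed

lemma integral_add_null_integrable:
  fixes f h :: "'a \<Rightarrow> 'b::{banach, second_countable_topology}"
  assumes h: "integrable M h" and h0: "integral\<^sup>L M h = 0"
  shows "integral\<^sup>L M (\<lambda>x. f x + h x) = integral\<^sup>L M f"
proof (cases "integrable M f")
  case True
  then show ?thesis
    using h h0 by simp
next
  case False
  have "\<not> integrable M (\<lambda>x. f x + h x)"
  proof
    assume "integrable M (\<lambda>x. f x + h x)"
    from Bochner_Integration.integrable_diff[OF this h] have "integrable M f"
      by simp
    with False show False ..
  qed
  with False show ?thesis
    by (simp add: not_integrable_integral_eq)
qed

lemma rot_seq_standard_cocycles_LIMSEQ_iff:
  assumes A0: "0 \<in> A" and A_diff: "\<And>r s. r \<in> A \<Longrightarrow> s \<in> A \<Longrightarrow> r - s \<in> A"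
    and pb: "principal_bundle A X Xh \<pi> T" and X: "compact_space X"
    and \<alpha>1: "\<alpha>1 \<in> standard_cocycles A X Xh \<pi> T" and \<alpha>2: "\<alpha>2 \<in> standard_cocycles A X Xh \<pi> T"
    and gh: "gh ` topspace Xh \<subseteq> topspace Xh" and x: "x \<in> topspace X"
  shows "rot_seq A X Xh \<pi> T \<alpha>1 gh x \<longlonglongrightarrow> L \<longleftrightarrow> rot_seq A X Xh \<pi> T \<alpha>2 gh x \<longlonglongrightarrow> L"
proof -
  obtain F where F_cont: "continuous_map X euclideanreal F"
    and rho_diff: "\<And>k u. k ` topspace Xh \<subseteq> topspace Xh \<Longrightarrow> u \<in> topspace X \<Longrightarrow>
           \<exists>y\<in>topspace Xh. \<pi> y = u \<and>
             rho A X Xh \<pi> T \<alpha>1 k u - rho A X Xh \<pi> T \<alpha>2 k u = F (\<pi> (k y)) - F u"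
    using standard_cocycles_rho_diff[OF A0 A_diff pb \<alpha>1 \<alpha>2] by blast
  obtain B where B: "\<And>u. u \<in> topspace X \<Longrightarrow> \<bar>F u\<bar> \<le> B"
    using compact_space_continuous_map_bounded[OF X F_cont] by auto
  have \<pi>: "\<pi> y \<in> topspace X" if "y \<in> topspace Xh" for y
    using pb that by (auto simp: principal_bundle_def continuous_map_def)
  have "\<bar>rho A X Xh \<pi> T \<alpha>1 (gh ^^ n) x - rho A X Xh \<pi> T \<alpha>2 (gh ^^ n) x\<bar> \<le> 2 * B" for n
  proof -
    have gh_n: "(gh ^^ n) ` topspace Xh \<subseteq> topspace Xh"
      by (induction n) (use gh in auto)
    then obtain y where "y \<in> topspace Xh"
      and diff: "rho A X Xh \<pi> T \<alpha>1 (gh ^^ n) x - rho A X Xh \<pi> T \<alpha>2 (gh ^^ n) x = F (\<pi> ((gh ^^ n) y)) - F x"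
      using rho_diff[OF _ x] by blast
    then have "\<bar>F (\<pi> ((gh ^^ n) y))\<bar> \<le> B"
      using B \<pi> gh_n by blast
    with B[OF x] show ?thesis
      unfolding diff by (auto simp: abs_le_iff)
  qed
  then show ?thesis
    unfolding rot_seq_def by (rule LIMSEQ_divide_real_iff_bounded_diff)
qed

lemma mean_rot_standard_cocycles_eq:
  assumes A0: "0 \<in> A" and A_diff: "\<And>r s. r \<in> A \<Longrightarrow> s \<in> A \<Longrightarrow> r - s \<in> A"
    and pb: "principal_bundle A X Xh \<pi> T" and X: "compact_space X"
    and \<alpha>1: "\<alpha>1 \<in> standard_cocycles A X Xh \<pi> T" and \<alpha>2: "\<alpha>2 \<in> standard_cocycles A X Xh \<pi> T"
    and gh: "lifts_homeo X Xh \<pi> gh g" and \<mu>: "invariant_borel_prob X g \<mu>"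
  shows "mean_rot A X Xh \<pi> T \<alpha>1 gh \<mu> = mean_rot A X Xh \<pi> T \<alpha>2 gh \<mu>"
proof -
  obtain F where F_cont: "continuous_map X euclideanreal F"
    and rho_diff: "\<And>k u. k ` topspace Xh \<subseteq> topspace Xh \<Longrightarrow> u \<in> topspace X \<Longrightarrow>
           \<exists>y\<in>topspace Xh. \<pi> y = u \<and>
             rho A X Xh \<pi> T \<alpha>1 k u - rho A X Xh \<pi> T \<alpha>2 k u = F (\<pi> (k y)) - F u"
    using standard_cocycles_rho_diff[OF A0 A_diff pb \<alpha>1 \<alpha>2] by blast
  obtain B where B: "\<And>u. u \<in> topspace X \<Longrightarrow> \<bar>F u\<bar> \<le> B"
    using compact_space_continuous_map_bounded[OF X F_cont] by auto
  have "prob_space \<mu>" and sets: "sets \<mu> = sets (borel_of X)"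
    and g: "g \<in> measurable \<mu> \<mu>" and inv: "distr \<mu> \<mu> g = \<mu>"
    using \<mu> unfolding invariant_borel_prob_def by auto
  then interpret prob_space \<mu>
    by simp
  have space: "space \<mu> = topspace X"
    using sets_eq_imp_space_eq[OF sets] by (simp add: space_borel_of)
  have F_int: "integrable \<mu> F"
    by (rule integrable_const_bound[where B = B])
      (use B continuous_map_borel_measurable[OF F_cont sets] in \<open>auto simp: space\<close>)
  have gh_top: "gh y \<in> topspace Xh" and gh_lift: "\<pi> (gh y) = g (\<pi> y)" if "y \<in> topspace Xh" for y
    using gh that homeomorphic_imp_surjective_map unfolding lifts_homeo_def by blast+
  have "rho A X Xh \<pi> T \<alpha>1 gh u = rho A X Xh \<pi> T \<alpha>2 gh u + (F (g u) - F u)" if "u \<in> space \<mu>" for u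
    using rho_diff[of gh u] gh_top gh_lift that space by force
  then have "mean_rot A X Xh \<pi> T \<alpha>1 gh \<mu> =
      integral\<^sup>L \<mu> (\<lambda>u. rho A X Xh \<pi> T \<alpha>2 gh u + (F (g u) - F u))"
    unfolding mean_rot_def by (rule Bochner_Integration.integral_cong[OF refl])
  also have "\<dots> = mean_rot A X Xh \<pi> T \<alpha>2 gh \<mu>"
    unfolding mean_rot_def
    by (rule integral_add_null_integrable) (use integral_invariant_coboundary[OF g inv F_int] in auto)
  finally show ?thesis .
qed

theorem proposition2p16:
  fixes A :: "real set" and X :: "'a topology" and Xh :: "'b topology"
    and \<pi> :: "'b \<Rightarrow> 'a" and T :: "real \<Rightarrow> 'b \<Rightarrow> 'b"
  assumes "A = \<int> \<or> A = UNIV"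
    and "path_connected_space X" and "compact_space X"
    and "principal_bundle A X Xh \<pi> T"
    and "standard_cocycles A X Xh \<pi> T \<noteq> {}"
    and "\<alpha>1 \<in> standard_cocycles A X Xh \<pi> T" and "\<alpha>2 \<in> standard_cocycles A X Xh \<pi> T"
    and "lifts_homeo X Xh \<pi> gh g"
    and "x \<in> topspace X"
    and "invariant_borel_prob X g \<mu>"
  shows "(\<forall>L. (rot_seq A X Xh \<pi> T \<alpha>1 gh x \<longlonglongrightarrow> L) \<longleftrightarrow> (rot_seq A X Xh \<pi> T \<alpha>2 gh x \<longlonglongrightarrow> L))
       \<and> mean_rot A X Xh \<pi> T \<alpha>1 gh \<mu> = mean_rot A X Xh \<pi> T \<alpha>2 gh \<mu>"
proof -
  have A0: "0 \<in> A" and A_diff: "\<And>r s. r \<in> A \<Longrightarrow> s \<in> A \<Longrightarrow> r - s \<in> A"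
    using assms(1) by auto
  have "gh ` topspace Xh \<subseteq> topspace Xh"
    using assms(8) homeomorphic_imp_surjective_map unfolding lifts_homeo_def by blast
  then show ?thesis
    using rot_seq_standard_cocycles_LIMSEQ_iff[OF A0 A_diff assms(4,3,6,7) _ assms(9)]
      mean_rot_standard_cocycles_eq[OF A0 A_diff assms(4,3,6,7,8,10)]
    by blast
qed

end
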